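(* Let $n\geq 2$. For $k\in\mathbb{N}$ let $\mathbb{D}_k:=\{2^{-j}:0\leq j\leq k\}$, $\alpha_k:=2^{-nk}$, and $$\mathscr{R}_k:=\Big\{[0,s_1]\times\cdots\times[0,s_{n-1}]\times\Big[0,\frac{\alpha_k}{s_1\cdots s_{n-1}}\Big] : s_1,\dots,s_{n-1}\in\mathbb{D}_k\Big\},$$ and $\mathscr{R}:=\bigcup_{k\in\mathbb{N}}\mathscr{R}_k$. Then for every Orlicz function $\Phi$ with $\Phi=o(\Phi_{n-1})$ at $\infty$, the maximal operator $M_{\mathscr{R}}$ does not satisfy a weak $L^\Phi$ inequality.
   Context: For a family $\mathscr{R}$ of standard rectangles and measurable $f$, $M_{\mathscr{R}}f(x):=\sup\{\frac{1}{|R|}\int_{\tau(R)}|f| : R\in\mathscr{R},\ \tau \text{ a translation},\ x\in\tau(R)\}$, with $|\cdot|$ Lebesgue measure. An Orlicz function is a convex increasing $\Phi:[0,\infty)\to[0,\infty)$ with $\Phi(0)=0$; $L^\Phi(\mathbb{R}^n)$ is the set of measurable $f$ with $\Phi(|f|)\in L^1$. $M_{\mathscr{R}}$ satisfies a weak $L^\Phi$ inequality if there is $C>0$ such that $|\{M_{\mathscr{R}}f>\lambda\}|\leq\int_{\mathbb{R}^n}\Phi(C|f|/\lambda)$ for all $\lambda>0$ and all $f\in L^\Phi(\mathbb{R}^n)$. For $d>0$, $\Phi_d(t):=t(1+\log_+^d t)$, where $\log_+t=\max(\log t,0)$. *)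

theory Defs
  imports "HOL-Analysis.Analysis" "HOL-Library.Landau_Symbols"
begin

text \<open>Euclidean n-space is modelled as real ^ ('m option): the coordinates Some i
  (i :: 'm) are the first n-1 coordinates, None is the last one, and
  n = CARD('m option) = CARD('m) + 1 \<ge> 2 automatically.\<close>

definition dyadD :: "nat \<Rightarrow> real set" where
  "dyadD k = {(1/2) ^ j | j. j \<le> k}"

definition alphak :: "nat \<Rightarrow> nat \<Rightarrow> real" where
  "alphak n k = (1/2) ^ (n * k)"

definition rectk :: "nat \<Rightarrow> ('m::finite \<Rightarrow> real) \<Rightarrow> (real ^ ('m option)) set" where
  "rectk k s = {x. (\<forall>i. 0 \<le> x $ Some i \<and> x $ Some i \<le> s i) \<and>
                  0 \<le> x $ None \<and> x $ None \<le> alphak CARD('m option) k / (\<Prod>i\<in>UNIV. s i)}"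

definition RFam_k :: "nat \<Rightarrow> (real ^ ('m::finite option)) set set" where
  "RFam_k k = {rectk k s | s. \<forall>i. s i \<in> dyadD k}"

definition RFam :: "(real ^ ('m::finite option)) set set" where
  "RFam = (\<Union>k. RFam_k k)"

definition maxop :: "('a::euclidean_space) set set \<Rightarrow> ('a \<Rightarrow> real) \<Rightarrow> 'a \<Rightarrow> ennreal" where
  "maxop \<R> f x = (SUP (R, a) \<in> {(R, a). R \<in> \<R> \<and> x \<in> (\<lambda>y. a + y) ` R}.
      (\<integral>\<^sup>+ y \<in> (\<lambda>y. a + y) ` R. ennreal \<bar>f y\<bar> \<partial>lebesgue) / emeasure lebesgue R)"

definition orlicz :: "(real \<Rightarrow> real) \<Rightarrow> bool" where
  "orlicz \<Phi> \<longleftrightarrow> convex_on {0..} \<Phi> \<and> mono_on {0..} \<Phi> \<and> \<Phi> 0 = 0 \<and> (\<forall>t\<ge>0. \<Phi> t \<ge> 0)"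

definition LPhi :: "(real \<Rightarrow> real) \<Rightarrow> ('a::euclidean_space \<Rightarrow> real) set" where
  "LPhi \<Phi> = {f. f \<in> borel_measurable lebesgue \<and> integrable lebesgue (\<lambda>x. \<Phi> \<bar>f x\<bar>)}"

definition weak_LPhi :: "('a::euclidean_space) set set \<Rightarrow> (real \<Rightarrow> real) \<Rightarrow> bool" where
  "weak_LPhi \<R> \<Phi> \<longleftrightarrow> (\<exists>C>0. \<forall>lam>0. \<forall>f \<in> LPhi \<Phi>.
      emeasure lebesgue {x. maxop \<R> f x > ennreal lam}
        \<le> (\<integral>\<^sup>+ x. ennreal (\<Phi> (C * \<bar>f x\<bar> / lam)) \<partial>lebesgue))"

definition PhiD :: "real \<Rightarrow> real \<Rightarrow> real" where
  "PhiD d t = t * (1 + (max (ln t) 0) powr d)"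

end

theory Submission
  imports Defs "HOL-Real_Asymp.Real_Asymp"
begin

text \<open>Test the weak inequality on the indicator of the cube \<open>Q = [0, \<alpha>\<^sub>k]\<^sup>n\<close>. Every rectangle
  of \<open>\<R>\<^sub>k\<close> contains \<open>Q\<close> and has volume \<open>\<alpha>\<^sub>k\<close>, so the average of \<open>1\<^sub>Q\<close> over it is
  \<open>\<alpha>\<^sub>k\<^sup>n\<^sup>-\<^sup>1\<close> and the whole rectangle lies in the superlevel set at height \<open>\<alpha>\<^sub>k\<^sup>n\<^sup>-\<^sup>1/2\<close>.
  The \<open>(k+1)\<^sup>n\<^sup>-\<^sup>1\<close> rectangles with dyadic sides \<open>2\<^sup>-\<^sup>j\<close> contain pairwise disjoint slabs
  (coordinates between \<open>3/4\<close> of a side and the side) of volume \<open>4\<^sup>1\<^sup>-\<^sup>n \<alpha>\<^sub>k\<close>, so the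
  superlevel set has measure at least \<open>(k+1)\<^sup>n\<^sup>-\<^sup>1 4\<^sup>1\<^sup>-\<^sup>n \<alpha>\<^sub>k\<close>, while the right-hand side of
  the weak inequality is \<open>\<Phi>(2C \<alpha>\<^sub>k\<^sup>1\<^sup>-\<^sup>n) \<alpha>\<^sub>k\<^sup>n\<close>. As \<open>log (\<alpha>\<^sub>k\<^sup>1\<^sup>-\<^sup>n)\<close> is linear in \<open>k\<close>,
  \<open>\<Phi> = o(\<Phi>\<^sub>n\<^sub>-\<^sub>1)\<close> makes the latter \<open>o((k+1)\<^sup>n\<^sup>-\<^sup>1 \<alpha>\<^sub>k)\<close>: a contradiction for large \<open>k\<close>.\<close>

lemma prod_UNIV_option:
  "(\<Prod>i\<in>(UNIV::'a::finite option set). g i) = g None * (\<Prod>j\<in>UNIV. g (Some j))"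
proof -
  have "prod g (insert None (range Some)) = g None * prod g (range Some)"
    by (rule prod.insert) auto
  also have "prod g (range Some) = (\<Prod>j\<in>UNIV. g (Some j))"
    by (simp add: prod.reindex)
  finally show ?thesis
    by (simp only: UNIV_option_conv[symmetric])
qed

lemma emeasure_lebesgue_cbox_cart:
  "emeasure lebesgue (cbox l (u::real^'n)) = ennreal (\<Prod>i\<in>UNIV. max 0 (u$i - l$i))"
proof (cases "cbox l u = {}")
  case True
  then obtain i where "u$i < l$i"
    using interval_eq_empty_cart(2) by blast
  then have "(\<Prod>i\<in>UNIV. max 0 (u$i - l$i)) = 0"
    by (intro prod_zero) (auto intro!: exI[of _ i])
  with True show ?thesis by (simp del: prod_zero_iff)
next
  case False
  then have "\<forall>i. l$i \<le> u$i"
    using interval_ne_empty_cart(1) by blast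
  then have "(\<Prod>i\<in>UNIV. u$i - l$i) = (\<Prod>i\<in>UNIV. max 0 (u$i - l$i))"
    by (intro prod.cong) (auto simp: max_def)
  with content_cbox_cart[OF False] show ?thesis
    by (simp add: emeasure_eq_measure2)
qed

lemma nn_integral_translated_cbox_indicator_cbox:
  fixes r q a :: "real^'n"
  shows "(\<integral>\<^sup>+ y \<in> (\<lambda>y. a + y) ` cbox 0 r. ennreal \<bar>indicator (cbox 0 q) y\<bar> \<partial>lebesgue)
     = ennreal (\<Prod>i\<in>UNIV. max 0 (min (a$i + r$i) (q$i) - max (a$i) 0))"
proof -
  have "(\<lambda>y. a + y) ` cbox 0 r = cbox a (a + r)"
    using cbox_translation[of a 0 r] by simp
  then have "(\<integral>\<^sup>+ y \<in> (\<lambda>y. a + y) ` cbox 0 r. ennreal \<bar>indicator (cbox 0 q) y\<bar> \<partial>lebesgue)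
      = (\<integral>\<^sup>+ y. indicator (cbox a (a + r) \<inter> cbox 0 q) y \<partial>lebesgue)"
    by (intro nn_integral_cong) (auto split: split_indicator)
  also have "\<dots> = emeasure lebesgue (cbox a (a + r) \<inter> cbox 0 q)"
    by (intro nn_integral_indicator) auto
  also have "cbox a (a + r) \<inter> cbox 0 q = cbox (\<chi> i. max (a$i) (0$i)) (\<chi> i. min ((a+r)$i) (q$i))"
    unfolding Int_interval_cart interval_cbox_cart ..
  finally show ?thesis
    by (simp add: emeasure_lebesgue_cbox_cart)
qed

lemma superlevel_maxop_eq:
  "{x. ennreal lam < maxop F f x} =
    (\<Union>R\<in>F. \<Union>y\<in>R. (\<lambda>a. a + y) ` {a. ennreal lam <
      (\<integral>\<^sup>+ y \<in> (\<lambda>y. a + y) ` R. ennreal \<bar>f y\<bar> \<partial>lebesgue) / emeasure lebesgue R})"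
  unfolding maxop_def less_SUP_iff by (fastforce simp: image_iff add.commute)

lemma open_superlevel_maxop_indicator_cbox:
  fixes F :: "(real^'n) set set"
  assumes F: "\<forall>R\<in>F. \<exists>r. (\<forall>i. 0 < r$i) \<and> R = cbox 0 r" and "0 \<le> lam"
  shows "open {x. ennreal lam < maxop F (indicator (cbox 0 q)) x}"
proof -
  define G where "G R = {a. ennreal lam <
    (\<integral>\<^sup>+ y \<in> (\<lambda>y. a + y) ` R. ennreal \<bar>indicator (cbox 0 q) y\<bar> \<partial>lebesgue) / emeasure lebesgue R}" for R
  have "open (G R)" if "R \<in> F" for R
  proof -
    obtain r where r: "\<forall>i. 0 < r$i" "R = cbox 0 r"
      using F \<open>R \<in> F\<close> by blast
    then have vol: "0 < (\<Prod>i\<in>UNIV. r$i)"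
      by (simp add: prod_pos)
    have "emeasure lebesgue R = ennreal (\<Prod>i\<in>UNIV. r$i)"
      using r by (simp add: emeasure_lebesgue_cbox_cart less_imp_le)
    then have "G R = {a. lam < (\<Prod>i\<in>UNIV. max 0 (min (a$i + r$i) (q$i) - max (a$i) 0)) / (\<Prod>i\<in>UNIV. r$i)}"
      unfolding G_def r(2) nn_integral_translated_cbox_indicator_cbox
      using vol \<open>0 \<le> lam\<close> by (simp add: r(2) divide_ennreal prod_nonneg ennreal_less_iff)
    also have "open \<dots>"
      using r(1) by (intro open_Collect_less continuous_intros) (simp add: order_less_imp_not_eq2)
    finally show ?thesis .
  qed
  then show ?thesis
    unfolding superlevel_maxop_eq G_def[symmetric]
    by (auto intro!: open_UN simp: add.commute[of _ "_ :: real^'n"] open_translation)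
qed

definition rectk_corner :: "nat \<Rightarrow> ('m::finite \<Rightarrow> real) \<Rightarrow> real^('m option)" where
  "rectk_corner k s =
    (\<chi> i. case i of Some j \<Rightarrow> s j | None \<Rightarrow> alphak CARD('m option) k / prod s UNIV)"

lemma
  fixes s :: "'m::finite \<Rightarrow> real"
  shows rectk_corner_Some [simp]: "rectk_corner k s $ Some j = s j"
  and rectk_corner_None [simp]: "rectk_corner k s $ None = alphak CARD('m option) k / prod s UNIV"
  by (simp_all add: rectk_corner_def)

lemma rectk_eq_cbox: "rectk k (s :: 'm::finite \<Rightarrow> real) = cbox 0 (rectk_corner k s)"
  unfolding rectk_def by (auto simp: mem_box_cart split_option_all)

lemma dyadD_bounds:
  assumes "x \<in> dyadD k"
  shows "(1/2)^k \<le> x" "x \<le> 1" "0 < x"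
  using assms unfolding dyadD_def by (auto intro: power_decreasing power_le_one)

lemma alphak_pos: "0 < alphak n k"
  by (simp add: alphak_def)

lemma alphak_le_dyadD:
  assumes "x \<in> dyadD k" "0 < n"
  shows "alphak n k \<le> x"
proof -
  have "alphak n k \<le> (1/2)^k"
    unfolding alphak_def using \<open>0 < n\<close> by (intro power_decreasing) auto
  with dyadD_bounds(1)[OF assms(1)] show ?thesis by linarith
qed

lemma emeasure_rectk:
  fixes s :: "'m::finite \<Rightarrow> real"
  assumes "\<forall>i. 0 < s i"
  shows "emeasure lebesgue (rectk k s) = ennreal (alphak CARD('m option) k)"
proof -
  have "0 < prod s UNIV"
    using assms by (simp add: prod_pos)
  moreover have "(\<Prod>j\<in>UNIV. max 0 (s j)) = prod s UNIV"
    using assms by (intro prod.cong) (auto simp: less_imp_le)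
  ultimately show ?thesis
    using assms alphak_pos[of "CARD('m option)" k]
    by (simp add: order_less_imp_not_eq2 rectk_eq_cbox emeasure_lebesgue_cbox_cart prod_UNIV_option)
qed

lemma RFam_cbox: "\<forall>R\<in>(RFam :: (real^('m::finite option)) set set). \<exists>r. (\<forall>i. 0 < r$i) \<and> R = cbox 0 r"
proof
  fix R :: "(real^('m option)) set"
  assume "R \<in> RFam"
  then obtain k s where "\<forall>i. s i \<in> dyadD k" and R: "R = rectk k s"
    unfolding RFam_def RFam_k_def by blast
  then have "\<forall>i. 0 < s i"
    using dyadD_bounds(3) by blast
  then have "\<forall>i. 0 < rectk_corner k s $ i"
    using alphak_pos by (simp add: split_option_all prod_pos)
  with R show "\<exists>r. (\<forall>i. 0 < r$i) \<and> R = cbox 0 r"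
    using rectk_eq_cbox by blast
qed

lemma cube_subset_rectk:
  fixes s :: "'m::finite \<Rightarrow> real"
  assumes "\<forall>i. s i \<in> dyadD k"
  shows "cbox 0 (\<chi> i. alphak CARD('m option) k) \<subseteq> rectk k s"
proof -
  let ?\<alpha> = "alphak CARD('m option) k"
  have s: "?\<alpha> \<le> s i" "0 < s i" "s i \<le> 1" for i
    using assms alphak_le_dyadD[of "s i" k] dyadD_bounds[of "s i" k] by auto
  then have "0 < prod s UNIV" "prod s UNIV \<le> 1"
    by (auto simp: prod_pos less_imp_le intro: prod_le_1)
  then have "?\<alpha> \<le> ?\<alpha> / prod s UNIV"
    using alphak_pos by (simp add: le_divide_eq mult_le_cancel_left1)
  with s(1) show ?thesis
    by (auto simp: rectk_eq_cbox mem_box_cart split_option_all) (meson order.trans)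
qed

lemma rectk_subset_superlevel_maxop:
  fixes s :: "'m::finite \<Rightarrow> real" and k :: nat
  defines "\<alpha> \<equiv> alphak CARD('m option) k"
  assumes s: "\<forall>i. s i \<in> dyadD k" and "0 \<le> lam" "lam < \<alpha> ^ CARD('m)"
  shows "rectk k s \<subseteq> {x. ennreal lam < maxop RFam (indicator (cbox 0 (\<chi> i. \<alpha>))) x}"
proof
  fix x
  assume x: "x \<in> rectk k s"
  let ?Q = "cbox 0 (\<chi> i. \<alpha>) :: (real^('m option)) set"
  have "\<alpha> > 0"
    unfolding \<alpha>_def by (rule alphak_pos)
  have Q: "?Q \<subseteq> rectk k s"
    unfolding \<alpha>_def using s by (rule cube_subset_rectk)
  have "emeasure lebesgue ?Q = ennreal (\<alpha> ^ CARD('m option))"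
    using \<open>\<alpha> > 0\<close> by (simp add: emeasure_lebesgue_cbox_cart less_imp_le)
  moreover have "(\<integral>\<^sup>+ y \<in> (\<lambda>y. 0 + y) ` rectk k s. ennreal \<bar>indicator ?Q y\<bar> \<partial>lebesgue)
      = (\<integral>\<^sup>+ y. indicator ?Q y \<partial>lebesgue)"
    using Q by (intro nn_integral_cong) (auto split: split_indicator)
  moreover have "emeasure lebesgue (rectk k s) = ennreal \<alpha>"
    unfolding \<alpha>_def using s dyadD_bounds(3) by (intro emeasure_rectk) blast
  ultimately have "(\<integral>\<^sup>+ y \<in> (\<lambda>y. 0 + y) ` rectk k s. ennreal \<bar>indicator ?Q y\<bar> \<partial>lebesgue)
      / emeasure lebesgue (rectk k s) = ennreal (\<alpha> ^ CARD('m))"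
    using \<open>\<alpha> > 0\<close> by (simp add: divide_ennreal)
  moreover have "rectk k s \<in> RFam"
    unfolding RFam_def RFam_k_def using s by blast
  ultimately show "x \<in> {x. ennreal lam < maxop RFam (indicator ?Q) x}"
    using x \<open>0 \<le> lam\<close> \<open>lam < \<alpha> ^ CARD('m)\<close>
    unfolding maxop_def less_SUP_iff by (force simp: ennreal_less_iff)
qed

definition rectk_slab :: "nat \<Rightarrow> ('m::finite \<Rightarrow> nat) \<Rightarrow> (real^('m option)) set" where
  "rectk_slab k j = cbox (\<chi> i. case i of Some m \<Rightarrow> 3/4 * (1/2)^(j m) | None \<Rightarrow> 0)
                         (rectk_corner k (\<lambda>m. (1/2)^(j m)))"

lemma rectk_slab_subset: "rectk_slab k j \<subseteq> rectk k (\<lambda>m. (1/2)^(j m))"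
proof -
  have "0 \<le> (\<chi> i. case i of Some m \<Rightarrow> 3/4 * (1/2::real)^(j m) | None \<Rightarrow> 0) $ i" for i
    by (cases i) simp_all
  then show ?thesis
    unfolding rectk_slab_def rectk_eq_cbox mem_box_cart subset_iff zero_index
    by (meson order.trans)
qed

lemma emeasure_rectk_slab:
  "emeasure lebesgue (rectk_slab k (j :: 'm::finite \<Rightarrow> nat)) = ennreal (alphak CARD('m option) k / 4^CARD('m))"
proof -
  let ?s = "\<lambda>m. (1/2::real)^(j m)"
  have "(\<Prod>m\<in>UNIV. max 0 (?s m - 3/4 * ?s m)) = (\<Prod>m\<in>UNIV. ?s m * (1/4))"
    by (intro prod.cong) auto
  also have "\<dots> = prod ?s UNIV * (1/4)^CARD('m)"
    by (simp only: prod.distrib prod_constant)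
  also have "\<dots> = prod ?s UNIV / 4^CARD('m)"
    by (simp add: power_one_over)
  moreover have "max 0 (alphak CARD('m option) k / prod ?s UNIV) * prod ?s UNIV = alphak CARD('m option) k"
    using alphak_pos[of "CARD('m option)" k] prod_pos[of UNIV ?s] by (simp add: max_def)
  ultimately show ?thesis
    by (simp add: rectk_slab_def emeasure_lebesgue_cbox_cart prod_UNIV_option)
qed

lemma rectk_slabs_disjoint:
  assumes "j \<noteq> j'"
  shows "rectk_slab k j \<inter> rectk_slab k j' = {}"
proof -
  have *: "rectk_slab k j \<inter> rectk_slab k j' = {}" if "j m < j' m" for j j' :: "'m::finite \<Rightarrow> nat" and m
  proof -
    have "(1/2::real)^(j' m) \<le> (1/2)^(Suc (j m))"
      using that by (intro power_decreasing) auto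
    then have "(1/2::real)^(j' m) < 3/4 * (1/2)^(j m)"
      using zero_less_power[of "1/2::real" "j m"] by (simp only: power_Suc) linarith
    have "x \<notin> rectk_slab k j'" if "x \<in> rectk_slab k j" for x
    proof -
      from that have "3/4 * (1/2)^(j m) \<le> x $ Some m"
        unfolding rectk_slab_def mem_box_cart by (metis option.simps(5) vec_lambda_beta)
      with \<open>(1/2)^(j' m) < 3/4 * (1/2)^(j m)\<close> have "rectk_corner k (\<lambda>m. (1/2)^(j' m)) $ Some m < x $ Some m"
        by simp
      then show ?thesis
        unfolding rectk_slab_def mem_box_cart by (meson not_le)
    qed
    then show ?thesis
      by blast
  qed
  obtain m where "j m \<noteq> j' m"
    using assms by (meson ext)
  then consider "j m < j' m" | "j' m < j m"
    by linarith
  then show ?thesis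
  proof cases
    case 1
    then show ?thesis by (rule *[of j m j'])
  next
    case 2
    then show ?thesis using *[of j' m j] by (simp add: Int_commute)
  qed
qed

lemma emeasure_superlevel_maxop_RFam_ge:
  fixes k :: nat
  defines "\<alpha> \<equiv> alphak CARD('m::finite option) k"
  assumes "0 \<le> lam" "lam < \<alpha> ^ CARD('m)"
  shows "ennreal (real (Suc k ^ CARD('m)) * \<alpha> / 4^CARD('m))
    \<le> emeasure lebesgue {x. ennreal lam < maxop (RFam :: (real^('m option)) set set) (indicator (cbox 0 (\<chi> i. \<alpha>))) x}"
    (is "_ \<le> emeasure lebesgue ?L")
proof -
  define J where "J = PiE (UNIV :: 'm set) (\<lambda>_. {..k})"
  have "finite J" "card J = Suc k ^ CARD('m)"
    unfolding J_def by (simp_all add: finite_PiE card_PiE)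
  have "0 \<le> \<alpha> / 4^CARD('m)"
    unfolding \<alpha>_def using alphak_pos[of "CARD('m option)" k] by simp
  then have "ennreal (real (Suc k ^ CARD('m)) * \<alpha> / 4^CARD('m)) = of_nat (card J) * ennreal (\<alpha> / 4^CARD('m))"
    unfolding \<open>card J = _\<close> by (simp add: ennreal_of_nat_eq_real_of_nat flip: ennreal_mult)
  also have "\<dots> = (\<Sum>j\<in>J. emeasure lebesgue (rectk_slab k j))"
    by (simp add: emeasure_rectk_slab \<alpha>_def)
  also have "\<dots> = emeasure lebesgue (\<Union>j\<in>J. rectk_slab k j)"
  proof (rule sum_emeasure)
    show "(rectk_slab k) ` J \<subseteq> sets lebesgue"
      unfolding rectk_slab_def by auto
    show "disjoint_family_on (rectk_slab k) J"
      using rectk_slabs_disjoint by (auto simp: disjoint_family_on_def)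
  qed fact
  also have "\<dots> \<le> emeasure lebesgue ?L"
  proof (rule emeasure_mono)
    have "rectk_slab k j \<subseteq> ?L" if "j \<in> J" for j
    proof -
      have "\<forall>m. (1/2)^(j m) \<in> dyadD k"
        using that unfolding J_def dyadD_def by (auto simp: PiE_iff)
      from rectk_subset_superlevel_maxop[OF this assms(2,3)[unfolded \<alpha>_def]]
      show ?thesis
        using rectk_slab_subset unfolding \<alpha>_def by blast
    qed
    then show "(\<Union>j\<in>J. rectk_slab k j) \<subseteq> ?L"
      by blast
    \<comment> \<open>\<open>emeasure\<close> vanishes on non-measurable sets, so measurability of \<open>?L\<close> is essential\<close>
    have "open ?L"
      using RFam_cbox \<open>0 \<le> lam\<close> by (rule open_superlevel_maxop_indicator_cbox)
    then show "?L \<in> sets lebesgue"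
      by auto
  qed
  finally show ?thesis .
qed

lemma PhiD_le_power_bound:
  assumes "1 \<le> t" "ln t \<le> a"
  shows "PhiD (real d) t \<le> t * (1 + a ^ d)"
proof -
  have "(max (ln t) 0) powr real d \<le> a ^ d"
  proof (cases "ln t = 0")
    case True
    then show ?thesis
      using assms by simp
  next
    case False
    then have "0 < ln t"
      using assms(1) by simp
    then show ?thesis
      using assms(2) by (simp add: powr_realpow power_mono)
  qed
  then show ?thesis
    using assms(1) unfolding PhiD_def by simp
qed

lemma ln_scaled_power2_le:
  assumes "0 < c"
  shows "ln (c * 2^(m*k)) \<le> (\<bar>ln c\<bar> + real m) * real (Suc k)"
proof -
  have "ln c \<le> \<bar>ln c\<bar> * real (Suc k)"
    by (rule order.trans[OF abs_ge_self]) (simp add: mult_le_cancel_left1)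
  moreover have "real (m*k) * ln 2 \<le> real m * real (Suc k)"
  proof -
    have "real (m*k) * ln 2 \<le> real (m*k)"
      using ln_2_less_1 by (intro mult_left_le) auto
    also have "\<dots> \<le> real m * real (Suc k)"
      by (simp only: of_nat_mult[symmetric] of_nat_le_iff) simp
    finally show ?thesis .
  qed
  ultimately show ?thesis
    using assms by (simp add: ln_mult ln_realpow algebra_simps)
qed

lemma smallo_PhiD_dyadic_witness:
  fixes \<Phi> :: "real \<Rightarrow> real" and d m :: nat
  assumes \<Phi>: "\<Phi> \<in> o[at_top](PhiD (real d))" and "0 < c" "0 < \<delta>" "0 < m"
  shows "\<exists>k. \<Phi> (c * 2^(m*k)) < \<delta> * (c * 2^(m*k)) * real (Suc k) ^ d"
proof -
  define A where "A = \<bar>ln c\<bar> + real m"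
  define \<epsilon> where "\<epsilon> = \<delta> / (2 * (1 + A^d))"
  have "0 < 1 + A^d"
    unfolding A_def by (simp add: add_pos_nonneg)
  then have "0 < \<epsilon>"
    unfolding \<epsilon>_def using \<open>0 < \<delta>\<close> by simp
  have "eventually (\<lambda>t. \<Phi> t \<le> \<epsilon> * PhiD (real d) t \<and> 1 \<le> t) at_top"
    using landau_o.smallD[OF \<Phi> \<open>0 < \<epsilon>\<close>] eventually_ge_at_top[of 1]
    by eventually_elim (auto simp: PhiD_def)
  moreover have "filterlim (\<lambda>k. c * 2^(m*k)) at_top sequentially"
    using \<open>0 < c\<close> \<open>0 < m\<close> by real_asymp
  ultimately have "eventually (\<lambda>k. \<Phi> (c * 2^(m*k)) \<le> \<epsilon> * PhiD (real d) (c * 2^(m*k)) \<and> 1 \<le> c * 2^(m*k)) sequentially"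
    by (rule eventually_compose_filterlim)
  then obtain k where k: "\<Phi> (c * 2^(m*k)) \<le> \<epsilon> * PhiD (real d) (c * 2^(m*k))" "1 \<le> c * 2^(m*k)"
    using eventually_happens'[OF sequentially_bot] by blast
  define T :: real where "T = c * 2^(m*k)"
  have "ln T \<le> A * real (Suc k)"
    unfolding T_def A_def using \<open>0 < c\<close> by (rule ln_scaled_power2_le)
  then have "PhiD (real d) T \<le> T * (1 + (A * real (Suc k)) ^ d)"
    using k(2) unfolding T_def by (intro PhiD_le_power_bound)
  also have "\<dots> \<le> T * ((1 + A^d) * real (Suc k) ^ d)"
    using k(2) unfolding T_def power_mult_distrib
    by (intro mult_left_mono) (auto simp: algebra_simps one_le_power)
  finally have "\<Phi> T \<le> \<epsilon> * (T * ((1 + A^d) * real (Suc k) ^ d))"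
    using k(1) \<open>0 < \<epsilon>\<close> unfolding T_def[symmetric] by (meson mult_left_mono order.trans less_imp_le)
  also have "\<dots> = \<delta> / 2 * T * real (Suc k) ^ d"
    unfolding \<epsilon>_def using \<open>0 < 1 + A^d\<close> by (simp add: field_simps)
  also have "\<dots> < \<delta> * T * real (Suc k) ^ d"
    using k(2) \<open>0 < \<delta>\<close> unfolding T_def[symmetric] by simp
  finally show ?thesis
    unfolding T_def by blast
qed

lemma nn_integral_Phi_indicator:
  fixes \<Phi> :: "real \<Rightarrow> real"
  assumes "A \<in> sets M" "\<Phi> 0 = 0"
  shows "(\<integral>\<^sup>+ x. ennreal (\<Phi> (c * \<bar>indicator A x\<bar> / lam)) \<partial>M) = ennreal (\<Phi> (c / lam)) * emeasure M A"
proof -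
  have "(\<lambda>x. ennreal (\<Phi> (c * \<bar>indicator A x\<bar> / lam))) = (\<lambda>x. ennreal (\<Phi> (c / lam)) * indicator A x)"
    using assms(2) by (auto split: split_indicator)
  then show ?thesis
    using nn_integral_cmult_indicator[OF assms(1)] by simp
qed

lemma indicator_in_LPhi:
  fixes A :: "'a::euclidean_space set"
  assumes "A \<in> sets lebesgue" "emeasure lebesgue A < \<infinity>" "\<Phi> 0 = 0"
  shows "indicator A \<in> LPhi \<Phi>"
proof -
  have "(\<lambda>x. \<Phi> \<bar>indicator A x\<bar>) = (\<lambda>x. \<Phi> 1 * indicator A x)"
    using assms(3) by (auto split: split_indicator)
  moreover have "integrable lebesgue (indicator A :: 'a \<Rightarrow> real)"
    using assms(1,2) by (simp add: integrable_indicator_iff)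
  ultimately show ?thesis
    using assms(1) unfolding LPhi_def by auto
qed

lemma weak_LPhi_RFam_cube_test:
  fixes \<Phi> :: "real \<Rightarrow> real"
  assumes "orlicz \<Phi>" "weak_LPhi (RFam :: (real^('m::finite option)) set set) \<Phi>"
  obtains C where "0 < C"
    "\<And>k. real (Suc k ^ CARD('m)) * alphak CARD('m option) k / 4^CARD('m)
       \<le> \<Phi> (2*C / alphak CARD('m option) k ^ CARD('m)) * alphak CARD('m option) k ^ CARD('m option)"
proof -
  obtain C where "0 < C" and weak: "\<forall>lam>0. \<forall>f\<in>LPhi \<Phi>.
      emeasure lebesgue {x. maxop (RFam :: (real^('m option)) set set) f x > ennreal lam}
        \<le> (\<integral>\<^sup>+ x. ennreal (\<Phi> (C * \<bar>f x\<bar> / lam)) \<partial>lebesgue)"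
    using assms(2) unfolding weak_LPhi_def by blast
  have "\<Phi> 0 = 0" and \<Phi>_nonneg: "\<And>t. 0 \<le> t \<Longrightarrow> 0 \<le> \<Phi> t"
    using assms(1) by (auto simp: orlicz_def)
  have bound: "real (Suc k ^ CARD('m)) * \<alpha> / 4^CARD('m) \<le> \<Phi> (2*C / \<alpha>^CARD('m)) * \<alpha> ^ CARD('m option)"
    if \<alpha>: "\<alpha> = alphak CARD('m option) k" for k \<alpha>
  proof -
    define Q where "Q = (cbox 0 (\<chi> i. \<alpha>) :: (real^('m option)) set)"
    define T where "T = 2*C / \<alpha>^CARD('m)"
    have "0 < \<alpha>"
      unfolding \<alpha> by (rule alphak_pos)
    then have "0 \<le> \<Phi> T"
      using \<open>0 < C\<close> by (intro \<Phi>_nonneg) (simp add: T_def)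
    have Q: "emeasure lebesgue Q = ennreal (\<alpha> ^ CARD('m option))"
      unfolding Q_def using \<open>0 < \<alpha>\<close> by (simp add: emeasure_lebesgue_cbox_cart less_imp_le)
    have "ennreal (real (Suc k ^ CARD('m)) * \<alpha> / 4^CARD('m))
        \<le> emeasure lebesgue {x. ennreal (\<alpha>^CARD('m)/2) < maxop (RFam :: (real^('m option)) set set) (indicator Q) x}"
      using \<open>0 < \<alpha>\<close> unfolding Q_def \<alpha> by (intro emeasure_superlevel_maxop_RFam_ge) auto
    also have "\<dots> \<le> (\<integral>\<^sup>+ x. ennreal (\<Phi> (C * \<bar>indicator Q x\<bar> / (\<alpha>^CARD('m)/2))) \<partial>lebesgue)"
    proof (rule weak[rule_format])
      show "0 < \<alpha>^CARD('m)/2"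
        using \<open>0 < \<alpha>\<close> by simp
      show "indicator Q \<in> LPhi \<Phi>"
        using Q \<open>\<Phi> 0 = 0\<close> by (intro indicator_in_LPhi) (simp_all add: Q_def)
    qed
    also have "\<dots> = ennreal (\<Phi> T) * ennreal (\<alpha> ^ CARD('m option))"
    proof -
      have "C / (\<alpha>^CARD('m)/2) = T"
        unfolding T_def by simp
      then show ?thesis
        using nn_integral_Phi_indicator[of Q lebesgue \<Phi> C "\<alpha>^CARD('m)/2"] \<open>\<Phi> 0 = 0\<close> Q
        by (simp add: Q_def)
    qed
    also have "\<dots> = ennreal (\<Phi> T * \<alpha> ^ CARD('m option))"
      using \<open>0 \<le> \<Phi> T\<close> \<open>0 < \<alpha>\<close> by (simp add: ennreal_mult)
    finally show ?thesis
      using \<open>0 \<le> \<Phi> T\<close> \<open>0 < \<alpha>\<close> unfolding T_def by (simp add: ennreal_le_iff)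
  qed
  show ?thesis
    using \<open>0 < C\<close> bound[OF refl] by (rule that)
qed

theorem mainTheorem4:
  fixes \<Phi> :: "real \<Rightarrow> real"
  assumes "orlicz \<Phi>"
    and "\<Phi> \<in> o[at_top](PhiD (real (CARD('m::finite option)) - 1))"
  shows "\<not> weak_LPhi (RFam :: (real ^ ('m option)) set set) \<Phi>"
proof
  assume "weak_LPhi (RFam :: (real ^ ('m option)) set set) \<Phi>"
  with assms(1) obtain C where "0 < C" and test: "\<And>k. real (Suc k ^ CARD('m)) * alphak CARD('m option) k / 4^CARD('m)
       \<le> \<Phi> (2*C / alphak CARD('m option) k ^ CARD('m)) * alphak CARD('m option) k ^ CARD('m option)"
    by (rule weak_LPhi_RFam_cube_test) blast
  define d where "d = CARD('m)"
  have "\<Phi> \<in> o[at_top](PhiD (real d))"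
    using assms(2) by (simp add: d_def)
  then obtain k where k: "\<Phi> (2*C * 2^(Suc d * d * k)) < 1 / (2*C*4^d) * (2*C * 2^(Suc d * d * k)) * real (Suc k) ^ d"
    using smallo_PhiD_dyadic_witness[of \<Phi> d "2*C" "1/(2*C*4^d)" "Suc d * d"] \<open>0 < C\<close>
    by (auto simp: d_def)
  define \<alpha> where "\<alpha> = alphak CARD('m option) k"
  have "0 < \<alpha>"
    unfolding \<alpha>_def by (rule alphak_pos)
  have "\<alpha>^d = 1 / 2^(Suc d * d * k)"
    unfolding \<alpha>_def alphak_def d_def by (simp add: power_mult[symmetric] power_one_over algebra_simps)
  then have "\<Phi> (2*C / \<alpha>^d) * \<alpha> ^ Suc d < 1 / (2*C*4^d) * (2*C / \<alpha>^d) * real (Suc k) ^ d * \<alpha> ^ Suc d"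
    using k \<open>0 < \<alpha>\<close> by (intro mult_strict_right_mono) auto
  also have "\<dots> = real (Suc k ^ d) * \<alpha> / 4^d"
    using \<open>0 < C\<close> \<open>0 < \<alpha>\<close> by (simp add: field_simps)
  finally show False
    using test[of k] unfolding \<alpha>_def d_def by simp
qed

end
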